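(* Let $\ell\in\mathbb{N}$ and let $\rho$ be a self-avoiding walk of length $\ell$ in $\mathbb{Z}^2$ such that $y(\rho_0)=\min_{0\le i\le\ell}y(\rho_i)$ and $y(\rho_\ell)=\max_{0\le i\le\ell}y(\rho_i)$. Let $h\in\mathbb{N}$. If $(j_1,k_1)\ne(j_2,k_2)$ are two right-detachable $\rho$-adjacencies of gap $h$, then $|k_2-k_1|\ge h$.
   Context: For a self-avoiding walk $\rho$ of length $\ell$ in $\mathbb{Z}^2$, an index pair $(j,k)$ with $0\le j<k\le\ell$ is a right-detachable $\rho$-adjacency of gap $k-j$ if: (i) $\{\rho_j,\rho_k\}$ are the endpoints of a vertical unit edge; (ii) letting $P$ be the unit square (plaquette) whose right side is this edge, the two horizontal edges of $P$ are traversed by $\rho$ and the two vertical edges of $P$ are not; (iii) the edge set obtained from the edges of $\rho$ by removing the two horizontal edges of $P$ and adding its two vertical edges is the disjoint union of a self-avoiding walk $\rho'$ and a self-avoiding polygon $Q$; (iv) for every positive integer $t$, the translate $Q+(t,0)$ is disjoint from $\rho'$. *)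

theory Defs
  imports Main
begin

type_synonym pt = "int \<times> int"

definition nbr :: "pt \<Rightarrow> pt \<Rightarrow> bool" where
  "nbr a b \<longleftrightarrow> \<bar>fst a - fst b\<bar> + \<bar>snd a - snd b\<bar> = 1"

definition saw :: "(nat \<Rightarrow> pt) \<Rightarrow> nat \<Rightarrow> bool" where
  "saw r m \<longleftrightarrow> inj_on r {0..m} \<and> (\<forall>i<m. nbr (r i) (r (Suc i)))"

definition walk_verts :: "(nat \<Rightarrow> pt) \<Rightarrow> nat \<Rightarrow> pt set" where
  "walk_verts r m = r ` {0..m}"

text \<open>Undirected unit edges are represented as two-element vertex sets.\<close>
definition walk_edges :: "(nat \<Rightarrow> pt) \<Rightarrow> nat \<Rightarrow> pt set set" where
  "walk_edges r m = {{r i, r (Suc i)} | i. i < m}"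

definition sap :: "(nat \<Rightarrow> pt) \<Rightarrow> nat \<Rightarrow> bool" where
  "sap q n \<longleftrightarrow> 3 \<le> n \<and> inj_on q {..<n} \<and> (\<forall>i<n. nbr (q i) (q (Suc i mod n)))"

definition poly_verts :: "(nat \<Rightarrow> pt) \<Rightarrow> nat \<Rightarrow> pt set" where
  "poly_verts q n = q ` {..<n}"

definition poly_edges :: "(nat \<Rightarrow> pt) \<Rightarrow> nat \<Rightarrow> pt set set" where
  "poly_edges q n = {{q i, q (Suc i mod n)} | i. i < n}"

text \<open>The vertical edge {rho_j, rho_k} = {(x,y),(x,y+1)} is the right side of the
  plaquette with corners (x-1,y),(x,y),(x-1,y+1),(x,y+1).\<close>
definition right_detachable :: "(nat \<Rightarrow> pt) \<Rightarrow> nat \<Rightarrow> nat \<Rightarrow> nat \<Rightarrow> bool" where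
  "right_detachable \<rho> l j k \<longleftrightarrow> j < k \<and> k \<le> l \<and>
     (\<exists>x y. {\<rho> j, \<rho> k} = {(x, y), (x, y + 1)} \<and>
       (let H = {{(x - 1, y), (x, y)}, {(x - 1, y + 1), (x, y + 1)}};
            V = {{(x - 1, y), (x - 1, y + 1)}, {(x, y), (x, y + 1)}};
            E = walk_edges \<rho> l
        in H \<subseteq> E \<and> V \<inter> E = {} \<and>
           (\<exists>r m q n. saw r m \<and> sap q n \<and>
              (E - H) \<union> V = walk_edges r m \<union> poly_edges q n \<and>
              walk_verts r m \<inter> poly_verts q n = {} \<and>
              (\<forall>t::int. t > 0 \<longrightarrow>
                 (\<lambda>v. (fst v + t, snd v)) ` poly_verts q n \<inter> walk_verts r m = {}))))"

end

theory Submission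
  imports Defs
begin

text \<open>Switching the plaquette of a right-detachable adjacency \<open>(j, k)\<close> preserves vertex degrees,
  so the endpoints of the walk stay off the polygon; since membership in the polygon can change
  along the walk only across the two removed horizontal edges, the polygon is exactly
  \<open>\<rho>\<^sub>j, \<dots>, \<rho>\<^sub>k\<close>, entered from \<open>\<rho>\<^sub>j\<^sub>-\<^sub>1\<close> and left to \<open>\<rho>\<^sub>k\<^sub>+\<^sub>1\<close>, the left neighbours of \<open>\<rho>\<^sub>j\<close> and \<open>\<rho>\<^sub>k\<close>.
  Condition (iv) then says that on every row these vertices lie strictly right of all other
  vertices of the walk.

  If two such adjacencies of gap \<open>h\<close> had \<open>k\<^sub>1 < k\<^sub>2 < k\<^sub>1 + h\<close>, the pieces
  \<open>\<rho>[j\<^sub>1, j\<^sub>2)\<close> and \<open>\<rho>(k\<^sub>1, k\<^sub>2]\<close> would each lie right of the other on a common row, so they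
  share no row. As the walk changes rows by at most one per step and the two pieces start and end
  on vertically adjacent rows, each piece returns to its starting row. Then \<open>\<rho>\<^sub>j\<^sub>1\<^sub>-\<^sub>1\<close> lies
  left of \<open>\<rho>\<^sub>j\<^sub>2\<^sub>-\<^sub>1\<close> and \<open>\<rho>\<^sub>k\<^sub>2\<^sub>+\<^sub>1\<close> left of \<open>\<rho>\<^sub>k\<^sub>1\<^sub>+\<^sub>1\<close>, placing the two right
  sides in columns that are each strictly left of the other.\<close>

definition west :: "pt \<Rightarrow> pt" where
  "west p = (fst p - 1, snd p)"

lemma saw_step_edge_at:
  assumes "saw \<rho> l" "i < l" "{\<rho> i, \<rho> (Suc i)} = {u, \<rho> p}" "p \<le> l"
  shows "(i = p \<and> \<rho> (Suc i) = u) \<or> (Suc i = p \<and> \<rho> i = u)"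
proof -
  have inj: "inj_on \<rho> {0..l}" using assms(1) unfolding saw_def by auto
  from assms(3) consider "\<rho> i = u" "\<rho> (Suc i) = \<rho> p" | "\<rho> i = \<rho> p" "\<rho> (Suc i) = u"
    by (auto simp: doubleton_eq_iff)
  then show ?thesis
    by cases (use inj assms(2,4) in \<open>auto dest: inj_onD\<close>)
qed

lemma saw_step_edge_inj:
  assumes "saw \<rho> l" "i < l" "i' < l" "{\<rho> i, \<rho> (Suc i)} = {\<rho> i', \<rho> (Suc i')}"
  shows "i = i'"
proof -
  have "(i = Suc i' \<and> \<rho> (Suc i) = \<rho> i') \<or> i = i'"
    using saw_step_edge_at[OF assms(1,2), of "\<rho> i'" "Suc i'"] assms(3,4) by auto
  moreover have "\<rho> (Suc (Suc i')) \<noteq> \<rho> i'" if "Suc (Suc i') \<le> l"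
    using assms(1) that unfolding saw_def by (auto dest: inj_onD)
  ultimately show ?thesis using assms(2) by auto
qed

lemma walk_edge_sub: "e \<in> walk_edges r m \<Longrightarrow> e \<subseteq> walk_verts r m"
  unfolding walk_edges_def walk_verts_def by auto

lemma poly_edge_sub: "e \<in> poly_edges q n \<Longrightarrow> e \<subseteq> poly_verts q n"
  unfolding poly_edges_def poly_verts_def by auto

lemma sap_two_neighbours:
  assumes "sap q n" "p \<in> poly_verts q n"
  obtains u v where "u \<noteq> v" "{p, u} \<in> poly_edges q n" "{p, v} \<in> poly_edges q n"
proof -
  from assms obtain i where i: "i < n" "p = q i" unfolding poly_verts_def by auto
  have n3: "3 \<le> n" and inj: "inj_on q {..<n}" using assms(1) unfolding sap_def by auto
  define i' where "i' = (i + n - 1) mod n"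
  have i'_less: "i' < n" using n3 unfolding i'_def by auto
  have suc_i': "Suc i' mod n = i"
  proof -
    have "Suc i' mod n = (i + n) mod n"
      using n3 unfolding i'_def by (simp add: mod_Suc_eq Suc_diff_le)
    then show ?thesis using i by simp
  qed
  have "Suc i mod n \<noteq> i'"
  proof
    assume "Suc i mod n = i'"
    then have "(i + 2) mod n = i mod n"
      using suc_i' i by (metis add_2_eq_Suc' mod_Suc_eq mod_less)
    then have "n dvd 2"
      using mod_eq_dvd_iff_nat[of i "i + 2" n] by simp
    then show False using n3 by (auto dest: dvd_imp_le)
  qed
  then have "q (Suc i mod n) \<noteq> q i'"
    using inj i'_less n3 by (auto dest: inj_onD)
  moreover have "{p, q (Suc i mod n)} \<in> poly_edges q n"
    using i unfolding poly_edges_def by auto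
  moreover have "{p, q i'} \<in> poly_edges q n"
    using i'_less suc_i' i unfolding poly_edges_def by (auto simp: insert_commute)
  ultimately show ?thesis using that by blast
qed

lemma iff_const_on_interval:
  assumes "\<And>i. a \<le> i \<Longrightarrow> i < b \<Longrightarrow> P i \<longleftrightarrow> P (Suc i)" "a \<le> i" "i \<le> b"
  shows "P i \<longleftrightarrow> P a"
  using assms(2,3) by (induction i rule: dec_induct) (use assms(1) in auto)

lemma doubleton_member_partner:
  "v \<in> \<Union>{{a, b}, {c, d}} \<Longrightarrow> \<exists>w. {v, w} \<in> {{a, b}, {c, d}}"
  by (auto simp: insert_commute)

lemma disjoint_doubletons_partner_unique:
  assumes "{a, b} \<inter> {c, d} = {}" "{v, u} \<in> {{a, b}, {c, d}}" "{v, u'} \<in> {{a, b}, {c, d}}"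
  shows "u = u'"
  using assms by (auto simp: doubleton_eq_iff)

lemma segment_between_two_cuts:
  fixes P :: "nat \<Rightarrow> bool"
  assumes "a < b" "b < l"
    and steps: "\<And>i. i < l \<Longrightarrow> i \<noteq> a \<Longrightarrow> i \<noteq> b \<Longrightarrow> P i \<longleftrightarrow> P (Suc i)"
    and "\<not> P 0" "\<not> P l" "\<exists>i\<le>l. P i" "i \<le> l"
  shows "P i \<longleftrightarrow> a < i \<and> i \<le> b"
proof -
  have below: "\<not> P i" if "i \<le> a" for i
    using iff_const_on_interval[of 0 a P i] steps assms(1,2,4) that by auto
  have above: "\<not> P i" if "b < i" "i \<le> l" for i
    using iff_const_on_interval[of "Suc b" l P i] iff_const_on_interval[of "Suc b" l P l]
      steps assms(1,2,5) that by auto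
  have between: "P i \<longleftrightarrow> P (Suc a)" if "a < i" "i \<le> b" for i
    using iff_const_on_interval[of "Suc a" b P i] steps assms(1,2) that by auto
  obtain i0 where "i0 \<le> l" "P i0" using assms(6) by blast
  then have "a < i0 \<and> i0 \<le> b" using below above by (meson not_le)
  then have "P (Suc a)" using between \<open>P i0\<close> by blast
  then show ?thesis
    using below above between assms(7) by (meson not_le)
qed

text \<open>A right-detachable adjacency with its plaquette described through the right side
  \<open>\<rho> j\<close>, \<open>\<rho> k\<close>; the last assumption is condition (iv) read row by row.\<close>
locale detachment =
  fixes \<rho> :: "nat \<Rightarrow> pt" and l j k :: nat
    and r :: "nat \<Rightarrow> pt" and m :: nat and q :: "nat \<Rightarrow> pt" and n :: nat
  assumes saw: "saw \<rho> l"
    and j_less_k: "j < k" and k_le_l: "k \<le> l"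
    and same_column: "fst (\<rho> j) = fst (\<rho> k)"
    and unit_apart: "\<bar>snd (\<rho> j) - snd (\<rho> k)\<bar> = 1"
    and horizontals_in_walk: "{{west (\<rho> j), \<rho> j}, {west (\<rho> k), \<rho> k}} \<subseteq> walk_edges \<rho> l"
    and switch: "(walk_edges \<rho> l - {{west (\<rho> j), \<rho> j}, {west (\<rho> k), \<rho> k}})
                   \<union> {{west (\<rho> j), west (\<rho> k)}, {\<rho> j, \<rho> k}}
                 = walk_edges r m \<union> poly_edges q n"
    and sap: "sap q n"
    and disjoint: "walk_verts r m \<inter> poly_verts q n = {}"
    and poly_not_left_of_walk:
      "\<And>p w. p \<in> poly_verts q n \<Longrightarrow> w \<in> walk_verts r m \<Longrightarrow> snd p = snd w \<Longrightarrow> fst w \<le> fst p"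
begin

abbreviation "J \<equiv> \<rho> j"
abbreviation "K \<equiv> \<rho> k"
abbreviation "H \<equiv> {{west J, J}, {west K, K}}"
abbreviation "V \<equiv> {{west J, west K}, {J, K}}"
abbreviation "E \<equiv> walk_edges \<rho> l"
abbreviation "F \<equiv> walk_edges r m \<union> poly_edges q n"
abbreviation "W \<equiv> walk_verts r m"
abbreviation "Q \<equiv> poly_verts q n"

lemma corners_distinct:
  "west J \<noteq> west K" "west J \<noteq> J" "west J \<noteq> K" "west K \<noteq> J" "west K \<noteq> K" "J \<noteq> K"
  using same_column unit_apart by (auto simp: west_def prod_eq_iff)

lemma union_V_eq_union_H: "\<Union>V = \<Union>H"
  by blast

lemma union_F_eq_union_E: "\<Union>F = \<Union>E"
proof -
  have "\<Union>F = \<Union>(E - H) \<union> \<Union>V" by (simp only: switch[symmetric] Union_Un_distrib)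
  also have "\<dots> = \<Union>((E - H) \<union> H)" by (simp only: union_V_eq_union_H Union_Un_distrib)
  also have "(E - H) \<union> H = E" using horizontals_in_walk by blast
  finally show ?thesis .
qed

lemma F_edge_same_side: "{u, v} \<in> F \<Longrightarrow> u \<in> Q \<longleftrightarrow> v \<in> Q"
  using walk_edge_sub poly_edge_sub disjoint by blast

lemma F_verts_sides: "\<Union>F \<subseteq> W \<union> Q"
  using walk_edge_sub poly_edge_sub by (metis Union_Un_distrib Union_least Un_mono)

lemma walk_vertex_in_edge:
  assumes "i \<le> l"
  shows "\<rho> i \<in> \<Union>E"
proof (cases "i < l")
  case True
  then have "{\<rho> i, \<rho> (Suc i)} \<in> E" unfolding walk_edges_def by blast
  then show ?thesis by (rule UnionI) simp
next
  case False
  then have "{\<rho> (l - 1), \<rho> (Suc (l - 1))} \<in> E" "Suc (l - 1) = i"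
    using assms j_less_k k_le_l unfolding walk_edges_def by auto
  then show ?thesis by (metis UnionI insertCI)
qed

lemma walk_vertex_sides:
  assumes "i \<le> l"
  shows "\<rho> i \<in> W \<union> Q"
proof -
  have "\<rho> i \<in> \<Union>F" unfolding union_F_eq_union_E by (rule walk_vertex_in_edge[OF assms])
  then show ?thesis by (rule subsetD[OF F_verts_sides])
qed

lemma poly_meets_walk: "\<exists>i\<le>l. \<rho> i \<in> Q"
proof -
  have "0 < n" using sap unfolding sap_def by simp
  then have "{q 0, q (Suc 0 mod n)} \<in> F" unfolding poly_edges_def by blast
  then have "q 0 \<in> \<Union>E" unfolding union_F_eq_union_E[symmetric] by (rule UnionI) simp
  also have "\<Union>E \<subseteq> \<rho> ` {0..l}" unfolding walk_verts_def[symmetric] by (rule Union_least) (rule walk_edge_sub)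
  finally obtain i where "i \<le> l" "q 0 = \<rho> i" by auto
  moreover have "q 0 \<in> Q" using \<open>0 < n\<close> unfolding poly_verts_def by simp
  ultimately show ?thesis by auto
qed

lemma poly_right_of_walk:
  assumes "p \<in> Q" "w \<in> W" "snd p = snd w"
  shows "fst w < fst p"
proof -
  have "p \<noteq> w" using assms disjoint by auto
  then show ?thesis
    using poly_not_left_of_walk[OF assms] assms(3) by (auto simp: prod_eq_iff)
qed

text \<open>The switch replaces each horizontal edge at a corner by the vertical edge at that
  corner, so it preserves degrees: a vertex of degree one in the walk cannot lie on the polygon.\<close>
lemma end_vertex_not_poly:
  assumes unique: "\<And>w. {v, w} \<in> E \<Longrightarrow> w = z"
  shows "v \<notin> Q"
proof
  assume "v \<in> Q"
  then obtain u u' where "u \<noteq> u'" "{v, u} \<in> poly_edges q n" "{v, u'} \<in> poly_edges q n"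
    by (rule sap_two_neighbours[OF sap])
  then have uu': "u \<noteq> u'" "{v, u} \<in> (E - H) \<union> V" "{v, u'} \<in> (E - H) \<union> V"
    unfolding switch by simp_all
  have E_partner: "x = z" if "{v, x} \<in> (E - H) \<union> V" "{v, x} \<notin> V" for x
    using that by (meson DiffD1 UnE unique)
  show False
  proof (cases "{v, z} \<in> H")
    case True
    have V_partner: "{v, x} \<in> V" if "{v, x} \<in> (E - H) \<union> V" for x
    proof (rule ccontr)
      assume "{v, x} \<notin> V"
      with that have "x = z" "{v, x} \<notin> H" using E_partner by (meson DiffD2 UnE)+
      with True show False by simp
    qed
    have "{v, u} \<in> V" "{v, u'} \<in> V" by (fact V_partner[OF uu'(2)] V_partner[OF uu'(3)])+
    moreover have "{west J, west K} \<inter> {J, K} = {}" using corners_distinct by blast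
    ultimately show False using uu'(1) disjoint_doubletons_partner_unique by metis
  next
    case False
    have not_V: "{v, x} \<notin> V" for x
    proof
      assume "{v, x} \<in> V"
      then have "v \<in> \<Union>H" unfolding union_V_eq_union_H[symmetric] by (rule UnionI) simp
      then obtain y where "{v, y} \<in> H" using doubleton_member_partner by metis
      moreover from this have "y = z" using horizontals_in_walk by (intro unique) (rule subsetD)
      ultimately show False using False by simp
    qed
    have "u = z" "u' = z" by (fact E_partner[OF uu'(2) not_V] E_partner[OF uu'(3) not_V])+
    then show False using uu'(1) by simp
  qed
qed

lemma walk_ends_not_poly: "\<rho> 0 \<notin> Q" "\<rho> l \<notin> Q"
proof -
  have "w = \<rho> (Suc 0)" if "{\<rho> 0, w} \<in> E" for w
  proof -
    from that obtain i where "i < l" "{\<rho> 0, w} = {\<rho> i, \<rho> (Suc i)}"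
      unfolding walk_edges_def by blast
    then have "i < l" "{\<rho> i, \<rho> (Suc i)} = {w, \<rho> 0}" by (metis insert_commute)+
    then show ?thesis using saw_step_edge_at[OF saw, of i w 0] by auto
  qed
  then show "\<rho> 0 \<notin> Q" by (rule end_vertex_not_poly)
  have "w = \<rho> (l - 1)" if "{\<rho> l, w} \<in> E" for w
  proof -
    from that obtain i where "i < l" "{\<rho> l, w} = {\<rho> i, \<rho> (Suc i)}"
      unfolding walk_edges_def by blast
    then have "i < l" "{\<rho> i, \<rho> (Suc i)} = {w, \<rho> l}" by (metis insert_commute)+
    then show ?thesis using saw_step_edge_at[OF saw, of i w l] by auto
  qed
  then show "\<rho> l \<notin> Q" by (rule end_vertex_not_poly)
qed

lemma horizontal_steps:
  obtains sJ sK where "sJ < sK" "sK < l"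
    "(sJ = j \<and> \<rho> (Suc j) = west J) \<or> (Suc sJ = j \<and> \<rho> sJ = west J)"
    "(sK = k \<and> \<rho> (Suc k) = west K) \<or> (Suc sK = k \<and> \<rho> sK = west K)"
    "\<And>i. i < l \<Longrightarrow> {\<rho> i, \<rho> (Suc i)} \<in> H \<Longrightarrow> i = sJ \<or> i = sK"
proof -
  have "{west J, J} \<in> E" "{west K, K} \<in> E" using horizontals_in_walk by simp_all
  then obtain sJ sK where sJ: "sJ < l" "{\<rho> sJ, \<rho> (Suc sJ)} = {west J, J}"
    and sK: "sK < l" "{\<rho> sK, \<rho> (Suc sK)} = {west K, K}"
    unfolding walk_edges_def by blast
  have J_cases: "(sJ = j \<and> \<rho> (Suc j) = west J) \<or> (Suc sJ = j \<and> \<rho> sJ = west J)"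
    using saw_step_edge_at[OF saw sJ] j_less_k k_le_l by auto
  have K_cases: "(sK = k \<and> \<rho> (Suc k) = west K) \<or> (Suc sK = k \<and> \<rho> sK = west K)"
    using saw_step_edge_at[OF saw sK] k_le_l by auto
  have "{west J, J} \<noteq> {west K, K}" using corners_distinct by (metis doubleton_eq_iff)
  then have "sJ \<noteq> sK" using sJ(2) sK(2) by metis
  then have "sJ < sK" using J_cases K_cases j_less_k by auto
  moreover have "i = sJ \<or> i = sK" if "i < l" "{\<rho> i, \<rho> (Suc i)} \<in> H" for i
    using that saw_step_edge_inj[OF saw, of i sJ] saw_step_edge_inj[OF saw, of i sK] sJ sK by auto
  ultimately show ?thesis using that[OF _ sK(1) J_cases K_cases] by blast
qed

lemma poly_segment:
  shows "0 < j" "\<rho> (j - 1) = west J" "k < l" "\<rho> (Suc k) = west K"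
    and "\<And>i. i \<le> l \<Longrightarrow> \<rho> i \<in> Q \<longleftrightarrow> j \<le> i \<and> i \<le> k"
proof -
  obtain sJ sK where cuts: "sJ < sK" "sK < l"
    and J_cases: "(sJ = j \<and> \<rho> (Suc j) = west J) \<or> (Suc sJ = j \<and> \<rho> sJ = west J)"
    and K_cases: "(sK = k \<and> \<rho> (Suc k) = west K) \<or> (Suc sK = k \<and> \<rho> sK = west K)"
    and H_steps: "\<And>i. i < l \<Longrightarrow> {\<rho> i, \<rho> (Suc i)} \<in> H \<Longrightarrow> i = sJ \<or> i = sK"
    using horizontal_steps by blast
  have steps: "\<rho> i \<in> Q \<longleftrightarrow> \<rho> (Suc i) \<in> Q" if "i < l" "i \<noteq> sJ" "i \<noteq> sK" for i
  proof -
    have "{\<rho> i, \<rho> (Suc i)} \<in> E" using that(1) unfolding walk_edges_def by blast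
    moreover have "{\<rho> i, \<rho> (Suc i)} \<notin> H" using H_steps that by blast
    ultimately have "{\<rho> i, \<rho> (Suc i)} \<in> F" unfolding switch[symmetric] by (intro UnI1 DiffI)
    then show ?thesis by (rule F_edge_same_side)
  qed
  have Q_iff: "\<rho> i \<in> Q \<longleftrightarrow> sJ < i \<and> i \<le> sK" if "i \<le> l" for i
    using segment_between_two_cuts[OF cuts steps walk_ends_not_poly poly_meets_walk that] by simp
  have "{J, K} \<in> F" unfolding switch[symmetric] by simp
  then have JK: "J \<in> Q \<longleftrightarrow> K \<in> Q" by (rule F_edge_same_side)
  txt \<open>Otherwise the polygon would contain \<open>west J\<close> while the walk contains \<open>J\<close>,
    just to its right.\<close>
  have "Suc sJ = j"
  proof (rule ccontr)
    assume "Suc sJ \<noteq> j"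
    then have sJ: "sJ = j" "\<rho> (Suc j) = west J" using J_cases by auto
    then have "J \<notin> Q" using Q_iff[of j] j_less_k k_le_l by simp
    then have "K \<notin> Q" using JK by simp
    then have "Suc sK = k" using Q_iff[of k] K_cases sJ(1) j_less_k k_le_l by auto
    then have "west J \<in> Q" using Q_iff[of "Suc j"] sJ cuts by simp
    moreover have "J \<in> W" using walk_vertex_sides[of j] \<open>J \<notin> Q\<close> j_less_k k_le_l by simp
    ultimately have "fst J < fst (west J)" by (rule poly_right_of_walk) (simp add: west_def)
    then show False by (simp add: west_def)
  qed
  then show "0 < j" "\<rho> (j - 1) = west J" using J_cases by auto
  have "J \<in> Q" using Q_iff[of j] \<open>Suc sJ = j\<close> cuts j_less_k k_le_l by simp
  then have "sK = k" using JK Q_iff[of k] K_cases k_le_l by auto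
  then show "k < l" "\<rho> (Suc k) = west K" using cuts K_cases by auto
  show "\<And>i. i \<le> l \<Longrightarrow> \<rho> i \<in> Q \<longleftrightarrow> j \<le> i \<and> i \<le> k"
    using Q_iff \<open>Suc sJ = j\<close> \<open>sK = k\<close> by auto
qed

lemma row_order:
  assumes "i \<le> l" "i' \<le> l" "j \<le> i" "i \<le> k" "\<not> (j \<le> i' \<and> i' \<le> k)"
    and "snd (\<rho> i) = snd (\<rho> i')"
  shows "fst (\<rho> i') < fst (\<rho> i)"
proof (rule poly_right_of_walk)
  show "\<rho> i \<in> Q" using poly_segment(5) assms by simp
  show "\<rho> i' \<in> W" using poly_segment(5) walk_vertex_sides assms by blast
qed (use assms in simp)

end

lemma right_translates_disjoint_row_le:
  assumes "\<forall>t::int. t > 0 \<longrightarrow> (\<lambda>v. (fst v + t, snd v)) ` A \<inter> B = {}"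
    and "p \<in> A" "w \<in> B" "snd p = snd w"
  shows "fst w \<le> fst p"
proof (rule ccontr)
  define t where "t = fst w - fst p"
  assume "\<not> fst w \<le> fst p"
  then have "t > 0" unfolding t_def by simp
  moreover have "(\<lambda>v. (fst v + t, snd v)) p = w"
    using assms(4) unfolding t_def by (simp add: prod_eq_iff)
  then have "w \<in> (\<lambda>v. (fst v + t, snd v)) ` A \<inter> B" using assms(2,3) by blast
  ultimately show False using assms(1) by blast
qed

lemma right_detachable_detachment:
  assumes saw: "saw \<rho> l" and rd: "right_detachable \<rho> l j k"
  shows "\<exists>r m q n. detachment \<rho> l j k r m q n"
proof -
  obtain x y r m q n where
    jk: "j < k" "k \<le> l" and
    xy: "{\<rho> j, \<rho> k} = {(x, y), (x, y + 1)}" and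
    H: "{{(x - 1, y), (x, y)}, {(x - 1, y + 1), (x, y + 1)}} \<subseteq> walk_edges \<rho> l" and
    switch: "(walk_edges \<rho> l - {{(x - 1, y), (x, y)}, {(x - 1, y + 1), (x, y + 1)}})
               \<union> {{(x - 1, y), (x - 1, y + 1)}, {(x, y), (x, y + 1)}}
             = walk_edges r m \<union> poly_edges q n" and
    sap: "sap q n" and disj: "walk_verts r m \<inter> poly_verts q n = {}" and
    translate: "\<forall>t::int. t > 0 \<longrightarrow> (\<lambda>v. (fst v + t, snd v)) ` poly_verts q n \<inter> walk_verts r m = {}"
    using rd unfolding right_detachable_def Let_def by (elim conjE exE) (rule that; assumption)
  have orientation: "(\<rho> j = (x, y) \<and> \<rho> k = (x, y + 1)) \<or> (\<rho> j = (x, y + 1) \<and> \<rho> k = (x, y))"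
    using xy by (auto simp: doubleton_eq_iff)
  then have horizontals: "{{(x - 1, y), (x, y)}, {(x - 1, y + 1), (x, y + 1)}}
      = {{west (\<rho> j), \<rho> j}, {west (\<rho> k), \<rho> k}}"
    by (elim disjE) (auto simp: west_def insert_commute)
  from orientation have verticals: "{{(x - 1, y), (x - 1, y + 1)}, {(x, y), (x, y + 1)}}
      = {{west (\<rho> j), west (\<rho> k)}, {\<rho> j, \<rho> k}}"
    by (elim disjE) (auto simp: west_def insert_commute)
  from orientation have "fst (\<rho> j) = fst (\<rho> k)" "\<bar>snd (\<rho> j) - snd (\<rho> k)\<bar> = 1"
    by auto
  moreover note H[unfolded horizontals] switch[unfolded horizontals verticals]
  ultimately have "detachment \<rho> l j k r m q n"
    by unfold_locales (assumption | rule saw jk sap disj right_translates_disjoint_row_le[OF translate])+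
  then show ?thesis by blast
qed

lemma right_detachable_shape:
  assumes "saw \<rho> l" "right_detachable \<rho> l j k"
  shows "0 < j" "k < l" "fst (\<rho> j) = fst (\<rho> k)" "\<bar>snd (\<rho> j) - snd (\<rho> k)\<bar> = 1"
    and "\<rho> (j - 1) = west (\<rho> j)" "\<rho> (Suc k) = west (\<rho> k)"
    and "\<And>i i'. i \<le> l \<Longrightarrow> i' \<le> l \<Longrightarrow> j \<le> i \<Longrightarrow> i \<le> k \<Longrightarrow> \<not> (j \<le> i' \<and> i' \<le> k) \<Longrightarrow>
           snd (\<rho> i) = snd (\<rho> i') \<Longrightarrow> fst (\<rho> i') < fst (\<rho> i)"
proof -
  obtain r m q n where "detachment \<rho> l j k r m q n"
    using right_detachable_detachment[OF assms] by blast
  then interpret detachment \<rho> l j k r m q n .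
  show "0 < j" "k < l" "\<rho> (j - 1) = west (\<rho> j)" "\<rho> (Suc k) = west (\<rho> k)"
    by (fact poly_segment)+
  show "fst (\<rho> j) = fst (\<rho> k)" "\<bar>snd (\<rho> j) - snd (\<rho> k)\<bar> = 1"
    by (fact same_column unit_apart)+
  show "\<And>i i'. i \<le> l \<Longrightarrow> i' \<le> l \<Longrightarrow> j \<le> i \<Longrightarrow> i \<le> k \<Longrightarrow> \<not> (j \<le> i' \<and> i' \<le> k) \<Longrightarrow>
           snd (\<rho> i) = snd (\<rho> i') \<Longrightarrow> fst (\<rho> i') < fst (\<rho> i)"
    by (fact row_order)
qed

lemma nat_intermed_int_val_between:
  fixes f :: "nat \<Rightarrow> int"
  assumes "\<forall>i. m \<le> i \<and> i < n \<longrightarrow> \<bar>f (Suc i) - f i\<bar> \<le> 1" "m \<le> n"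
    and "min (f m) (f n) \<le> c" "c \<le> max (f m) (f n)"
  shows "\<exists>i. m \<le> i \<and> i \<le> n \<and> f i = c"
proof (cases "f m \<le> f n")
  case True
  then show ?thesis using nat_intermed_int_val[OF assms(1,2)] assms(3,4) by simp
next
  case False
  have "\<forall>i. m \<le> i \<and> i < n \<longrightarrow> \<bar>- f (Suc i) - - f i\<bar> \<le> 1"
    using assms(1) by (simp add: abs_minus_commute)
  then show ?thesis
    using nat_intermed_int_val[of m n "\<lambda>i. - f i" "- c"] False assms(2-4) by simp
qed

lemma saw_intermediate_row:
  assumes "saw \<rho> l" "a \<le> b" "b \<le> l"
    and "min (snd (\<rho> a)) (snd (\<rho> b)) \<le> c" "c \<le> max (snd (\<rho> a)) (snd (\<rho> b))"
  obtains i where "a \<le> i" "i \<le> b" "snd (\<rho> i) = c"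
proof -
  have "\<forall>i. a \<le> i \<and> i < b \<longrightarrow> \<bar>snd (\<rho> (Suc i)) - snd (\<rho> i)\<bar> \<le> 1"
  proof (intro allI impI)
    fix i assume "a \<le> i \<and> i < b"
    then have "\<bar>fst (\<rho> i) - fst (\<rho> (Suc i))\<bar> + \<bar>snd (\<rho> i) - snd (\<rho> (Suc i))\<bar> = 1"
      using assms(1,3) unfolding saw_def nbr_def by simp
    then show "\<bar>snd (\<rho> (Suc i)) - snd (\<rho> i)\<bar> \<le> 1" by linarith
  qed
  then show ?thesis
    using nat_intermed_int_val_between[of a b "\<lambda>i. snd (\<rho> i)" c] assms(2,4,5) that by blast
qed

lemma unit_shifted_intervals_disjoint:
  fixes u v u' v' :: int
  assumes "\<bar>u - u'\<bar> = 1" "\<bar>v - v'\<bar> = 1"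
    and disjoint: "\<And>c. min u v \<le> c \<Longrightarrow> c \<le> max u v \<Longrightarrow> min u' v' \<le> c \<Longrightarrow> c \<le> max u' v' \<Longrightarrow> False"
  shows "u = v \<and> u' = v'"
proof -
  have "max u v < min u' v' \<or> max u' v' < min u v"
  proof (rule ccontr)
    assume "\<not> ?thesis"
    then show False by (intro disjoint[of "max (min u v) (min u' v')"]) linarith+
  qed
  then show ?thesis using assms(1,2) by linarith
qed

lemma right_detachable_gap_le_distance:
  assumes saw: "saw \<rho> l"
    and d1: "right_detachable \<rho> l j1 k1" and d2: "right_detachable \<rho> l j2 k2"
    and "k1 < k2" "k1 - j1 = k2 - j2"
  shows "k1 - j1 \<le> k2 - k1"
proof (rule ccontr)
  assume "\<not> k1 - j1 \<le> k2 - k1"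
  note S1 = right_detachable_shape[OF saw d1] and S2 = right_detachable_shape[OF saw d2]
  have jk: "j1 < k1" "j2 < k2" using d1 d2 unfolding right_detachable_def by simp_all
  have order: "j1 < j2" "j2 \<le> k1"
    using jk \<open>k1 < k2\<close> \<open>k1 - j1 = k2 - j2\<close> \<open>\<not> k1 - j1 \<le> k2 - k1\<close> by linarith+
  txt \<open>\<open>\<rho> i\<close> is on the first polygon only and \<open>\<rho> i'\<close> on the second only.\<close>
  have rows_apart: "snd (\<rho> i) \<noteq> snd (\<rho> i')"
    if "j1 \<le> i" "i < j2" "k1 < i'" "i' \<le> k2" for i i'
  proof
    assume same_row: "snd (\<rho> i) = snd (\<rho> i')"
    have "fst (\<rho> i') < fst (\<rho> i)"
      using S1(7)[of i i'] S1(2) S2(2) order that same_row by simp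
    moreover have "fst (\<rho> i) < fst (\<rho> i')"
      using S2(7)[of i' i] S1(2) S2(2) order that same_row by simp
    ultimately show False by simp
  qed
  define u v u' v' where "u = snd (\<rho> j1)" "v = snd (\<rho> j2)" "u' = snd (\<rho> k1)" "v' = snd (\<rho> k2)"
  have "u = v \<and> u' = v'"
  proof (rule unit_shifted_intervals_disjoint)
    show "\<bar>u - u'\<bar> = 1" "\<bar>v - v'\<bar> = 1" using S1(4) S2(4) unfolding u_v_u'_v'_def by simp_all
    fix c assume c: "min u v \<le> c" "c \<le> max u v" "min u' v' \<le> c" "c \<le> max u' v'"
    have "snd (\<rho> (j2 - 1)) = v" "j2 - 1 \<le> l" "j1 \<le> j2 - 1"
      using S2(5) order S1(2) unfolding u_v_u'_v'_def by (simp_all add: west_def)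
    then obtain i where "j1 \<le> i" "i \<le> j2 - 1" "snd (\<rho> i) = c"
      using saw_intermediate_row[OF saw, of j1 "j2 - 1" c] c(1,2) unfolding u_v_u'_v'_def by auto
    then have i: "j1 \<le> i" "i < j2" "snd (\<rho> i) = c" using order(1) by linarith+
    have "snd (\<rho> (Suc k1)) = u'" using S1(6) unfolding u_v_u'_v'_def by (simp add: west_def)
    then obtain i' where "Suc k1 \<le> i'" "i' \<le> k2" "snd (\<rho> i') = c"
      using saw_intermediate_row[OF saw, of "Suc k1" k2 c] \<open>k1 < k2\<close> S2(2) c(3,4)
      unfolding u_v_u'_v'_def by auto
    then have i': "k1 < i'" "i' \<le> k2" "snd (\<rho> i') = c" by simp_all
    show False using rows_apart[OF i(1,2) i'(1,2)] i(3) i'(3) by simp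
  qed
  then have "fst (\<rho> (j1 - 1)) < fst (\<rho> (j2 - 1))"
    using S1(7)[of "j2 - 1" "j1 - 1"] S1(1,2,5) S2(5) order
    unfolding u_v_u'_v'_def by (simp add: west_def)
  moreover have "fst (\<rho> (Suc k2)) < fst (\<rho> (Suc k1))"
    using S2(7)[of "Suc k1" "Suc k2"] S1(2,6) S2(2,6) order \<open>k1 < k2\<close> \<open>u = v \<and> u' = v'\<close>
    unfolding u_v_u'_v'_def by (simp add: west_def)
  ultimately show False using S1(3,5,6) S2(3,5,6) by (simp add: west_def)
qed

theorem mainTheorem11:
  fixes \<rho> :: "nat \<Rightarrow> int \<times> int" and l h j1 k1 j2 k2 :: nat
  assumes "saw \<rho> l"
    and "\<forall>i\<le>l. snd (\<rho> 0) \<le> snd (\<rho> i)"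
    and "\<forall>i\<le>l. snd (\<rho> i) \<le> snd (\<rho> l)"
    and "(j1, k1) \<noteq> (j2, k2)"
    and "right_detachable \<rho> l j1 k1" and "k1 - j1 = h"
    and "right_detachable \<rho> l j2 k2" and "k2 - j2 = h"
  shows "\<bar>int k2 - int k1\<bar> \<ge> int h"
proof -
  have "j1 < k1" "j2 < k2" using assms(5,7) unfolding right_detachable_def by simp_all
  consider "k1 < k2" | "k2 < k1" | "k1 = k2" by linarith
  then show ?thesis
  proof cases
    case 1
    then show ?thesis
      using right_detachable_gap_le_distance[OF assms(1,5,7)] assms(6,8) by linarith
  next
    case 2
    then show ?thesis
      using right_detachable_gap_le_distance[OF assms(1,7,5)] assms(6,8) by linarith
  next
    case 3
    then show ?thesis using \<open>j1 < k1\<close> \<open>j2 < k2\<close> assms(4,6,8) by auto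
  qed
qed

end
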